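(* Let $X:\mathbb{N}\to\mathbf{Set}_*$ be a tower of pointed sets, $A$ an abelian group and $B\subseteq A$ a subgroup. Then there is a natural inclusion $H(X,B)\hookrightarrow H(X,A)$, and for every $n\ge1$ it restricts to an isomorphism $H(X,A[n])\cong H(X,A)[n]$. If moreover $X$ satisfies the Mittag-Leffler condition, then $H(X,A/B)\cong H(X,A)/H(X,B)$ naturally, and for every $n\ge1$ the inclusion $H(X,nA)\hookrightarrow H(X,A)$ gives an isomorphism $H(X,nA)\cong nH(X,A)$. The same statements hold with $G$ in place of $H$.
   Context: $\mathbb{N}$ is regarded as a category with a single morphism $n\to m$ whenever $n\ge m$. For a pointed set $Y$, $Y\wedge A:=\bigoplus_{Y\setminus\{*\}}A$ (finitely supported pointed maps $Y\to A$), functorial via $f_*(sv)=f(s)v$, where $sv$ is the element with value $v$ at $s$ ($*v=0$). $G(X,A):=\lim_\mathbb{N}(X\wedge A)$; $K(X,A)$ is the image of the injective natural map $\rho:(\lim_\mathbb{N}X)\wedge A\to G(X,A)$, $\rho(xv)(n)=x(n)v$; $H(X,A):=G(X,A)/K(X,A)$. $A[n]=\{a\in A:na=0\}$. $X$ satisfies the Mittag-Leffler condition if for every $n$ there is $s\ge n$ with $\mathrm{Im}(X(s)\to X(n))=\mathrm{Im}(X(r)\to X(n))$ for all $r\ge s$. *)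

theory Defs
  imports "HOL-Algebra.Algebra"
begin

definition tower :: "(nat \<Rightarrow> 'x set) \<Rightarrow> (nat \<Rightarrow> 'x) \<Rightarrow> (nat \<Rightarrow> 'x \<Rightarrow> 'x) \<Rightarrow> bool" where
  "tower T p f \<longleftrightarrow> (\<forall>n. p n \<in> T n \<and> f n ` T (Suc n) \<subseteq> T n \<and> f n (p (Suc n)) = p n)"

fun bond :: "(nat \<Rightarrow> 'x \<Rightarrow> 'x) \<Rightarrow> nat \<Rightarrow> nat \<Rightarrow> 'x \<Rightarrow> 'x" where
  "bond f n 0 = id"
| "bond f n (Suc k) = bond f n k \<circ> f (n + k)"

text \<open>bond f n k : T (n+k) -> T n\<close>

definition mittag_leffler :: "(nat \<Rightarrow> 'x set) \<Rightarrow> (nat \<Rightarrow> 'x \<Rightarrow> 'x) \<Rightarrow> bool" where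
  "mittag_leffler T f \<longleftrightarrow>
     (\<forall>n. \<exists>s\<ge>n. \<forall>r\<ge>s. bond f n (s - n) ` T s = bond f n (r - n) ` T r)"

text \<open>Y smash A: finitely supported pointed maps Y -> A (value 1 at the basepoint
  and, by convention, outside Y).\<close>

definition wedge :: "'y set \<Rightarrow> 'y \<Rightarrow> ('a, 'b) monoid_scheme \<Rightarrow> ('y \<Rightarrow> 'a) set" where
  "wedge Y pt A = {s. (\<forall>y. s y \<in> carrier A) \<and> (\<forall>y. y \<notin> Y - {pt} \<longrightarrow> s y = \<one>\<^bsub>A\<^esub>)
                     \<and> finite {y. s y \<noteq> \<one>\<^bsub>A\<^esub>}}"

definition push :: "('a, 'b) monoid_scheme \<Rightarrow> 'y set \<Rightarrow> 'y \<Rightarrow> 'z set \<Rightarrow> 'z \<Rightarrow> ('y \<Rightarrow> 'z)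
                     \<Rightarrow> ('y \<Rightarrow> 'a) \<Rightarrow> ('z \<Rightarrow> 'a)" where
  "push A Y pt Z pt' g s = (\<lambda>z. if z \<in> Z - {pt'}
       then finprod A s {y \<in> Y - {pt}. g y = z \<and> s y \<noteq> \<one>\<^bsub>A\<^esub>} else \<one>\<^bsub>A\<^esub>)"

text \<open>G(T,A) = lim (T smash A), as a group under pointwise multiplication.\<close>

definition Gcar :: "(nat \<Rightarrow> 'x set) \<Rightarrow> (nat \<Rightarrow> 'x) \<Rightarrow> (nat \<Rightarrow> 'x \<Rightarrow> 'x)
                    \<Rightarrow> ('a, 'b) monoid_scheme \<Rightarrow> (nat \<Rightarrow> 'x \<Rightarrow> 'a) set" where
  "Gcar T p f A = {g. \<forall>n. g n \<in> wedge (T n) (p n) A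
       \<and> push A (T (Suc n)) (p (Suc n)) (T n) (p n) (f n) (g (Suc n)) = g n}"

definition Ggrp :: "(nat \<Rightarrow> 'x set) \<Rightarrow> (nat \<Rightarrow> 'x) \<Rightarrow> (nat \<Rightarrow> 'x \<Rightarrow> 'x)
                    \<Rightarrow> ('a, 'b) monoid_scheme \<Rightarrow> (nat \<Rightarrow> 'x \<Rightarrow> 'a) monoid" where
  "Ggrp T p f A = \<lparr>carrier = Gcar T p f A,
       monoid.mult = (\<lambda>g h. \<lambda>n y. g n y \<otimes>\<^bsub>A\<^esub> h n y), one = (\<lambda>n y. \<one>\<^bsub>A\<^esub>)\<rparr>"

definition limcar :: "(nat \<Rightarrow> 'x set) \<Rightarrow> (nat \<Rightarrow> 'x \<Rightarrow> 'x) \<Rightarrow> (nat \<Rightarrow> 'x) set" where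
  "limcar T f = {x. \<forall>n. x n \<in> T n \<and> f n (x (Suc n)) = x n}"

text \<open>rho : (lim T) smash A -> G(T,A), rho(s)(n) = (pr_n)_* s; K(T,A) its image.\<close>

definition rho :: "(nat \<Rightarrow> 'x set) \<Rightarrow> (nat \<Rightarrow> 'x) \<Rightarrow> (nat \<Rightarrow> 'x \<Rightarrow> 'x)
                    \<Rightarrow> ('a, 'b) monoid_scheme \<Rightarrow> ((nat \<Rightarrow> 'x) \<Rightarrow> 'a) \<Rightarrow> (nat \<Rightarrow> 'x \<Rightarrow> 'a)" where
  "rho T p f A s = (\<lambda>n. push A (limcar T f) p (T n) (p n) (\<lambda>x. x n) s)"

definition Kset :: "(nat \<Rightarrow> 'x set) \<Rightarrow> (nat \<Rightarrow> 'x) \<Rightarrow> (nat \<Rightarrow> 'x \<Rightarrow> 'x)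
                    \<Rightarrow> ('a, 'b) monoid_scheme \<Rightarrow> (nat \<Rightarrow> 'x \<Rightarrow> 'a) set" where
  "Kset T p f A = rho T p f A ` wedge (limcar T f) p A"

definition Hgrp :: "(nat \<Rightarrow> 'x set) \<Rightarrow> (nat \<Rightarrow> 'x) \<Rightarrow> (nat \<Rightarrow> 'x \<Rightarrow> 'x)
                    \<Rightarrow> ('a, 'b) monoid_scheme \<Rightarrow> (nat \<Rightarrow> 'x \<Rightarrow> 'a) set monoid" where
  "Hgrp T p f A = Ggrp T p f A Mod Kset T p f A"

definition Gmap :: "('a \<Rightarrow> 'c) \<Rightarrow> (nat \<Rightarrow> 'x \<Rightarrow> 'a) \<Rightarrow> (nat \<Rightarrow> 'x \<Rightarrow> 'c)" where
  "Gmap \<phi> g = (\<lambda>n y. \<phi> (g n y))"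

definition Hmap :: "(nat \<Rightarrow> 'x set) \<Rightarrow> (nat \<Rightarrow> 'x) \<Rightarrow> (nat \<Rightarrow> 'x \<Rightarrow> 'x)
                    \<Rightarrow> ('c, 'd) monoid_scheme \<Rightarrow> ('a \<Rightarrow> 'c)
                    \<Rightarrow> (nat \<Rightarrow> 'x \<Rightarrow> 'a) set \<Rightarrow> (nat \<Rightarrow> 'x \<Rightarrow> 'c) set" where
  "Hmap T p f A' \<phi> c = Kset T p f A' <#>\<^bsub>Ggrp T p f A'\<^esub> (Gmap \<phi> ` c)"

text \<open>n-torsion A[n] and the subgroup nA (written multiplicatively).\<close>

definition torsion :: "('a, 'b) monoid_scheme \<Rightarrow> nat \<Rightarrow> 'a set" where
  "torsion A n = {a \<in> carrier A. a [^]\<^bsub>A\<^esub> n = \<one>\<^bsub>A\<^esub>}"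

definition npowers :: "('a, 'b) monoid_scheme \<Rightarrow> nat \<Rightarrow> 'a set" where
  "npowers A n = (\<lambda>a. a [^]\<^bsub>A\<^esub> n) ` carrier A"

end

theory Submission
  imports Defs
begin

text \<open>
  Since each functor \<open>T n \<wedge> -\<close> is exact, \<open>G(X,-)\<close> is left exact: it preserves inclusions
  and kernels, and \<open>G(X,A[n]) = G(X,A)[n]\<close> because torsion is computed pointwise. The functor
  \<open>K(X,-) = lim X \<wedge> -\<close> is exact, and an element of \<open>lim X \<wedge> A\<close> is detected at a finite
  level, so \<open>K(X,B) = K(X,A) \<inter> G(X,B)\<close>; hence \<open>H(X,B) \<rightarrow> H(X,A)\<close> is injective, and correcting
  representatives by elements of \<open>K(X,A)\<close> identifies \<open>H(X,A[n])\<close> with \<open>H(X,A)[n]\<close>.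

  Under the Mittag-Leffler condition every element of \<open>G(X,A)\<close> is supported on the stable
  images \<open>X'(n)\<close>, and \<open>X'(n+1) \<rightarrow> X'(n)\<close> is onto. Given a surjection \<open>A \<rightarrow> A'\<close>, an element of
  \<open>G(X,A')\<close> is then lifted level by level: lift the next coordinate arbitrarily and correct it
  by a lift, along a section of \<open>X'(n+1) \<rightarrow> X'(n)\<close>, of the discrepancy, which lies in the
  kernel. So \<open>G(X,-)\<close> preserves the surjections \<open>A \<rightarrow> A/B\<close> and \<open>a \<mapsto> na\<close>, and the claims
  about \<open>H\<close> follow by a diagram chase.
\<close>

section \<open>Finitely supported maps and their pushforwards\<close>

lemma wedgeI:
  assumes "\<And>y. s y \<in> carrier A" "\<And>y. y \<notin> Y - {pt} \<Longrightarrow> s y = \<one>\<^bsub>A\<^esub>"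
    "finite {y. s y \<noteq> \<one>\<^bsub>A\<^esub>}"
  shows "s \<in> wedge Y pt A"
  using assms unfolding wedge_def by auto

lemma wedgeD:
  assumes "s \<in> wedge Y pt A"
  shows "s y \<in> carrier A" "y \<notin> Y - {pt} \<Longrightarrow> s y = \<one>\<^bsub>A\<^esub>"
    "finite {y. s y \<noteq> \<one>\<^bsub>A\<^esub>}"
  using assms unfolding wedge_def by auto

lemma wedge_supp: "s \<in> wedge Y pt A \<Longrightarrow> {y. s y \<noteq> \<one>\<^bsub>A\<^esub>} \<subseteq> Y - {pt}"
  unfolding wedge_def by auto

context comm_monoid
begin

lemma wedge_one: "(\<lambda>y. \<one>) \<in> wedge Y pt G"
  by (rule wedgeI) auto

lemma supp_mult_subset: "{y. s y \<otimes> t y \<noteq> \<one>} \<subseteq> {y. s y \<noteq> \<one>} \<union> {y. t y \<noteq> \<one>}"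
  by auto

lemma wedge_mult:
  assumes "s \<in> wedge Y pt G" "t \<in> wedge Y pt G"
  shows "(\<lambda>y. s y \<otimes> t y) \<in> wedge Y pt G"
proof (rule wedgeI)
  show "finite {y. s y \<otimes> t y \<noteq> \<one>}"
    by (rule finite_subset[OF supp_mult_subset]) (use wedgeD[OF assms(1)] wedgeD[OF assms(2)] in auto)
qed (use wedgeD[OF assms(1)] wedgeD[OF assms(2)] in auto)


lemma push_eq_finprod:
  assumes s: "s \<in> wedge Y pt G" and F: "finite F" "{y. s y \<noteq> \<one>} \<subseteq> F"
  shows "push G Y pt Z pt' g s z = (if z \<in> Z - {pt'} then finprod G s {y \<in> F. g y = z} else \<one>)"
proof (cases "z \<in> Z - {pt'}")
  case True
  have "finprod G s {y \<in> Y - {pt}. g y = z \<and> s y \<noteq> \<one>} = finprod G s {y \<in> F. g y = z}"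
    by (rule finprod_mono_neutral_cong_left) (use s F in \<open>auto simp: wedge_def\<close>)
  then show ?thesis using True by (simp add: push_def)
qed (auto simp: push_def)

lemma push_supp: "{z. push G Y pt Z pt' g s z \<noteq> \<one>} \<subseteq> g ` {y. s y \<noteq> \<one>}"
proof
  fix z assume z: "z \<in> {z. push G Y pt Z pt' g s z \<noteq> \<one>}"
  show "z \<in> g ` {y. s y \<noteq> \<one>}"
  proof (rule ccontr)
    assume "z \<notin> g ` {y. s y \<noteq> \<one>}"
    then have "{y \<in> Y - {pt}. g y = z \<and> s y \<noteq> \<one>} = {}" by auto
    then have "push G Y pt Z pt' g s z = \<one>"
      by (simp only: push_def finprod_empty if_cancel)
    then show False using z by simp
  qed
qed

lemma push_wedge:
  assumes s: "s \<in> wedge Y pt G"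
  shows "push G Y pt Z pt' g s \<in> wedge Z pt' G"
proof (rule wedgeI)
  show "finite {z. push G Y pt Z pt' g s z \<noteq> \<one>}"
    by (rule finite_subset[OF push_supp]) (use wedgeD(3)[OF s] in auto)
qed (use wedgeD(1)[OF s] in \<open>auto simp: push_def\<close>)

lemma push_one: "push G Y pt Z pt' g (\<lambda>y. \<one>) = (\<lambda>z. \<one>)"
  unfolding push_def by auto

lemma push_mult:
  assumes s: "s \<in> wedge Y pt G" and t: "t \<in> wedge Y pt G"
  shows "push G Y pt Z pt' g (\<lambda>y. s y \<otimes> t y)
       = (\<lambda>z. push G Y pt Z pt' g s z \<otimes> push G Y pt Z pt' g t z)"
proof
  fix z
  define F where "F = {y. s y \<noteq> \<one>} \<union> {y. t y \<noteq> \<one>}"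
  have F: "finite F" using wedgeD(3)[OF s] wedgeD(3)[OF t] by (simp add: F_def)
  have "{y. s y \<otimes> t y \<noteq> \<one>} \<subseteq> F" "{y. s y \<noteq> \<one>} \<subseteq> F" "{y. t y \<noteq> \<one>} \<subseteq> F"
    by (auto simp: F_def)
  note push_eq_finprod[OF wedge_mult[OF s t] F this(1), of Z pt' g z]
    push_eq_finprod[OF s F this(2), of Z pt' g z] push_eq_finprod[OF t F this(3), of Z pt' g z]
  then show "push G Y pt Z pt' g (\<lambda>y. s y \<otimes> t y) z
       = push G Y pt Z pt' g s z \<otimes> push G Y pt Z pt' g t z"
    using wedgeD(1)[OF s] wedgeD(1)[OF t] by (auto intro!: finprod_multf)
qed

lemma push_cong:
  assumes "\<And>y. y \<in> Y - {pt} \<Longrightarrow> g y = g' y"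
  shows "push G Y pt Z pt' g s = push G Y pt Z pt' g' s"
proof -
  have "{y \<in> Y - {pt}. g y = z \<and> s y \<noteq> \<one>} = {y \<in> Y - {pt}. g' y = z \<and> s y \<noteq> \<one>}" for z
    using assms by auto
  then show ?thesis unfolding push_def by (simp only:)
qed

lemma push_id:
  assumes s: "s \<in> wedge Y pt G"
  shows "push G Y pt Y pt (\<lambda>y. y) s = s"
proof
  fix z
  define F where "F = {y. s y \<noteq> \<one>}"
  have "finite F" using wedgeD(3)[OF s] by (simp add: F_def)
  from push_eq_finprod[OF s this, of Y pt "\<lambda>y. y" z] have e:
    "push G Y pt Y pt (\<lambda>y. y) s z = (if z \<in> Y - {pt} then finprod G s {y \<in> F. y = z} else \<one>)"
    by (simp add: F_def)
  show "push G Y pt Y pt (\<lambda>y. y) s z = s z"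
  proof (cases "z \<in> F")
    case True
    then have "{y \<in> F. y = z} = {z}" by auto
    then show ?thesis unfolding e using True wedge_supp[OF s] wedgeD(1)[OF s] by (auto simp: F_def)
  next
    case False
    then have "{y \<in> F. y = z} = {}" "s z = \<one>" by (auto simp: F_def)
    then show ?thesis unfolding e by (simp only: finprod_empty if_cancel)
  qed
qed

lemma push_comp:
  assumes s: "s \<in> wedge Y pt G" and g1: "g1 ` (Y - {pt}) \<subseteq> Z" and g2: "g2 pt' = pt''"
  shows "push G Z pt' W pt'' g2 (push G Y pt Z pt' g1 s) = push G Y pt W pt'' (g2 \<circ> g1) s"
proof
  fix w
  define F where "F = {y. s y \<noteq> \<one>}"
  have F: "finite F" using wedgeD(3)[OF s] by (simp add: F_def)
  have FY: "F \<subseteq> Y - {pt}" using wedge_supp[OF s] by (simp add: F_def)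
  have F': "finite (g1 ` F)" using F by simp
  have ps: "push G Y pt Z pt' g1 s \<in> wedge Z pt' G" by (rule push_wedge[OF s])
  have e1: "push G Z pt' W pt'' g2 (push G Y pt Z pt' g1 s) w
      = (if w \<in> W - {pt''} then finprod G (push G Y pt Z pt' g1 s) {z \<in> g1 ` F. g2 z = w} else \<one>)"
    by (rule push_eq_finprod[OF ps F']) (use push_supp in \<open>simp add: F_def\<close>)
  have e2: "push G Y pt W pt'' (g2 \<circ> g1) s w
      = (if w \<in> W - {pt''} then finprod G s {y \<in> F. (g2 \<circ> g1) y = w} else \<one>)"
    by (rule push_eq_finprod[OF s F]) (simp add: F_def)
  have e3: "push G Y pt Z pt' g1 s z = (if z \<in> Z - {pt'} then finprod G s {y \<in> F. g1 y = z} else \<one>)" for z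
    by (rule push_eq_finprod[OF s F]) (simp add: F_def)
  show "push G Z pt' W pt'' g2 (push G Y pt Z pt' g1 s) w = push G Y pt W pt'' (g2 \<circ> g1) s w"
  proof (cases "w \<in> W - {pt''}")
    case False then show ?thesis unfolding e1 e2 by auto
  next
    case True
    have cs: "\<And>y. s y \<in> carrier G" using wedgeD(1)[OF s] .
    have "finprod G s {y \<in> F. (g2 \<circ> g1) y = w}
        = finprod G s (\<Union>z\<in>{z \<in> g1 ` F. g2 z = w}. {y \<in> F. g1 y = z})"
      by (rule arg_cong[where f="finprod G s"]) auto
    also have "\<dots> = finprod G (\<lambda>z. finprod G s {y \<in> F. g1 y = z}) {z \<in> g1 ` F. g2 z = w}"
      by (rule finprod_UN_disjoint) (use F cs in \<open>auto simp: pairwise_def disjnt_def\<close>)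
    also have "\<dots> = finprod G (push G Y pt Z pt' g1 s) {z \<in> g1 ` F. g2 z = w}"
    proof (rule finprod_cong')
      fix z assume z: "z \<in> {z \<in> g1 ` F. g2 z = w}"
      then have "z \<in> Z - {pt'}" using g1 g2 FY True by auto
      then show "finprod G s {y \<in> F. g1 y = z} = push G Y pt Z pt' g1 s z"
        unfolding e3 by simp
    qed (use wedgeD(1)[OF ps] in auto)
    finally show ?thesis unfolding e1 e2 using True by simp
  qed
qed

end

lemma comm_group_hom_finprod:
  assumes A: "comm_group A" and A': "comm_group A'" and h: "h \<in> hom A A'"
    and S: "finite S" and s: "s \<in> S \<rightarrow> carrier A"
  shows "h (finprod A s S) = finprod A' (\<lambda>y. h (s y)) S"
  using S s
proof (induction S rule: finite_induct)
  interpret A: comm_group A by (rule A)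
  interpret A': comm_group A' by (rule A')
  interpret group_hom A A' h by (simp add: group_hom_def group_hom_axioms_def h A.is_group A'.is_group)
  {
    case empty
    then show ?case by simp
  next
    case (insert x F)
    then have "h (finprod A s (insert x F)) = h (s x) \<otimes>\<^bsub>A'\<^esub> h (finprod A s F)"
      by (simp add: A.finprod_insert)
    also have "\<dots> = finprod A' (\<lambda>y. h (s y)) (insert x F)"
      using insert by (simp add: A'.finprod_insert Pi_iff)
    finally show ?case .
  }
qed

lemma wedge_hom:
  assumes h: "h \<in> hom A A'" and one: "h \<one>\<^bsub>A\<^esub> = \<one>\<^bsub>A'\<^esub>" and s: "s \<in> wedge Y pt A"
  shows "(\<lambda>y. h (s y)) \<in> wedge Y pt A'"
proof (rule wedgeI)
  show "finite {y. h (s y) \<noteq> \<one>\<^bsub>A'\<^esub>}"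
    by (rule finite_subset[OF _ wedgeD(3)[OF s]]) (use one in auto)
qed (use h wedgeD[OF s] one in \<open>auto simp: hom_def\<close>)

lemma hom_push:
  assumes A: "comm_group A" and A': "comm_group A'" and h: "h \<in> hom A A'"
    and s: "s \<in> wedge Y pt A"
  shows "(\<lambda>z. h (push A Y pt Z pt' g s z)) = push A' Y pt Z pt' g (\<lambda>y. h (s y))"
proof
  interpret A: comm_group A by (rule A)
  interpret A': comm_group A' by (rule A')
  interpret group_hom A A' h by (simp add: group_hom_def group_hom_axioms_def h A.is_group A'.is_group)
  fix z
  define F where "F = {y. s y \<noteq> \<one>\<^bsub>A\<^esub>}"
  have F: "finite F" using wedgeD(3)[OF s] by (simp add: F_def)
  have hs: "(\<lambda>y. h (s y)) \<in> wedge Y pt A'" by (rule wedge_hom[OF h hom_one s])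
  have "push A Y pt Z pt' g s z = (if z \<in> Z - {pt'} then finprod A s {y \<in> F. g y = z} else \<one>\<^bsub>A\<^esub>)"
    by (rule A.push_eq_finprod[OF s F]) (simp add: F_def)
  moreover have "push A' Y pt Z pt' g (\<lambda>y. h (s y)) z
      = (if z \<in> Z - {pt'} then finprod A' (\<lambda>y. h (s y)) {y \<in> F. g y = z} else \<one>\<^bsub>A'\<^esub>)"
    by (rule A'.push_eq_finprod[OF hs F]) (auto simp: F_def)
  ultimately show "h (push A Y pt Z pt' g s z) = push A' Y pt Z pt' g (\<lambda>y. h (s y)) z"
    using comm_group_hom_finprod[OF A A' h, of "{y \<in> F. g y = z}" s] F wedgeD(1)[OF s] by auto
qed

context comm_group
begin

lemma supp_inv_subset: "{y. inv (s y) \<noteq> \<one>} \<subseteq> {y. s y \<noteq> \<one>}"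
  by auto

lemma wedge_inv:
  assumes s: "s \<in> wedge Y pt G"
  shows "(\<lambda>y. inv (s y)) \<in> wedge Y pt G"
proof (rule wedgeI)
  show "finite {y. inv s y \<noteq> \<one>}"
    by (rule finite_subset[OF supp_inv_subset wedgeD(3)[OF s]])
qed (use wedgeD[OF s] in auto)

lemma push_inv:
  assumes s: "s \<in> wedge Y pt G"
  shows "push G Y pt Z pt' g (\<lambda>y. inv (s y)) = (\<lambda>z. inv (push G Y pt Z pt' g s z))"
proof
  fix z
  have "push G Y pt Z pt' g (\<lambda>y. inv (s y) \<otimes> s y) = push G Y pt Z pt' g (\<lambda>y. \<one>)"
    using wedgeD(1)[OF s] by simp
  then have "push G Y pt Z pt' g (\<lambda>y. inv (s y)) z \<otimes> push G Y pt Z pt' g s z = \<one>"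
    unfolding push_mult[OF wedge_inv[OF s] s] push_one by meson
  then show "push G Y pt Z pt' g (\<lambda>y. inv (s y)) z = inv (push G Y pt Z pt' g s z)"
    using inv_equality wedgeD(1)[OF push_wedge[OF s]] wedgeD(1)[OF push_wedge[OF wedge_inv[OF s]]]
    by metis
qed

end

section \<open>The group \<open>G(X,A)\<close>\<close>

lemma Ggrp_simps [simp]:
  "carrier (Ggrp T p f A) = Gcar T p f A"
  "g \<otimes>\<^bsub>Ggrp T p f A\<^esub> h = (\<lambda>n y. g n y \<otimes>\<^bsub>A\<^esub> h n y)"
  "\<one>\<^bsub>Ggrp T p f A\<^esub> = (\<lambda>n y. \<one>\<^bsub>A\<^esub>)"
  by (simp_all add: Ggrp_def)

lemma GcarI:
  assumes "\<And>n. g n \<in> wedge (T n) (p n) A"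
    "\<And>n. push A (T (Suc n)) (p (Suc n)) (T n) (p n) (f n) (g (Suc n)) = g n"
  shows "g \<in> Gcar T p f A"
  using assms by (auto simp: Gcar_def)

lemma GcarD:
  assumes "g \<in> Gcar T p f A"
  shows "g n \<in> wedge (T n) (p n) A"
    "push A (T (Suc n)) (p (Suc n)) (T n) (p n) (f n) (g (Suc n)) = g n"
  using assms by (auto simp: Gcar_def)

lemma Gcar_carrier: "g \<in> Gcar T p f A \<Longrightarrow> g n y \<in> carrier A"
  using GcarD(1) wedgeD(1) by metis

context comm_group
begin

lemma Gcar_inv_closed:
  assumes g: "g \<in> Gcar T p f G"
  shows "(\<lambda>n y. inv (g n y)) \<in> Gcar T p f G"
  by (rule GcarI) (simp_all add: wedge_inv GcarD[OF g] push_inv)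

lemma Ggrp_comm_group: "comm_group (Ggrp T p f G)"
proof (rule comm_groupI)
  fix x y assume "x \<in> carrier (Ggrp T p f G)" "y \<in> carrier (Ggrp T p f G)"
  then have x: "x \<in> Gcar T p f G" and y: "y \<in> Gcar T p f G" by simp_all
  show "x \<otimes>\<^bsub>Ggrp T p f G\<^esub> y \<in> carrier (Ggrp T p f G)"
    by (simp, rule GcarI) (simp_all add: wedge_mult push_mult GcarD[OF x] GcarD[OF y])
  show "x \<otimes>\<^bsub>Ggrp T p f G\<^esub> y = y \<otimes>\<^bsub>Ggrp T p f G\<^esub> x"
    using Gcar_carrier[OF x] Gcar_carrier[OF y] by (auto simp: m_comm)
next
  show "\<one>\<^bsub>Ggrp T p f G\<^esub> \<in> carrier (Ggrp T p f G)"
    by (simp, rule GcarI) (simp_all add: wedge_one push_one)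
next
  fix x y z assume "x \<in> carrier (Ggrp T p f G)" "y \<in> carrier (Ggrp T p f G)" "z \<in> carrier (Ggrp T p f G)"
  then show "x \<otimes>\<^bsub>Ggrp T p f G\<^esub> y \<otimes>\<^bsub>Ggrp T p f G\<^esub> z = x \<otimes>\<^bsub>Ggrp T p f G\<^esub> (y \<otimes>\<^bsub>Ggrp T p f G\<^esub> z)"
    by (simp add: m_assoc Gcar_carrier)
next
  fix x assume "x \<in> carrier (Ggrp T p f G)"
  then show "\<one>\<^bsub>Ggrp T p f G\<^esub> \<otimes>\<^bsub>Ggrp T p f G\<^esub> x = x"
    by (simp add: Gcar_carrier)
  show "\<exists>y\<in>carrier (Ggrp T p f G). y \<otimes>\<^bsub>Ggrp T p f G\<^esub> x = \<one>\<^bsub>Ggrp T p f G\<^esub>"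
    using \<open>x \<in> _\<close> by (intro bexI[of _ "\<lambda>n y. inv (x n y)"]) (simp_all add: Gcar_carrier Gcar_inv_closed)
qed

lemma Ggrp_inv:
  assumes g: "g \<in> Gcar T p f G"
  shows "inv\<^bsub>Ggrp T p f G\<^esub> g = (\<lambda>n y. inv (g n y))"
proof -
  interpret GG: comm_group "Ggrp T p f G" by (rule Ggrp_comm_group)
  show ?thesis
    by (intro GG.inv_equality) (simp_all add: g Gcar_carrier[OF g] Gcar_inv_closed)
qed

lemma Ggrp_pow: "g [^]\<^bsub>Ggrp T p f G\<^esub> (k::nat) = (\<lambda>n y. g n y [^] k)"
  by (induction k) auto

end

lemma Gmap_hom:
  assumes A: "comm_group A" and A': "comm_group A'" and h: "h \<in> hom A A'"
  shows "Gmap h \<in> hom (Ggrp T p f A) (Ggrp T p f A')"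
proof (rule homI)
  interpret group_hom A A' h
    by (simp add: group_hom_def group_hom_axioms_def h comm_group.axioms(2)[OF A] comm_group.axioms(2)[OF A'])
  fix g assume "g \<in> carrier (Ggrp T p f A)"
  then have g: "g \<in> Gcar T p f A" by simp
  show "Gmap h g \<in> carrier (Ggrp T p f A')"
    unfolding Gmap_def Ggrp_simps
    by (rule GcarI) (simp_all add: wedge_hom[OF h hom_one] GcarD[OF g] flip: hom_push[OF A A' h])
next
  fix x y assume "x \<in> carrier (Ggrp T p f A)" "y \<in> carrier (Ggrp T p f A)"
  then show "Gmap h (x \<otimes>\<^bsub>Ggrp T p f A\<^esub> y) = Gmap h x \<otimes>\<^bsub>Ggrp T p f A'\<^esub> Gmap h y"
    using h by (simp add: Gmap_def hom_mult Gcar_carrier)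
qed

lemma subgroup_comm_group:
  assumes A: "comm_group A" and C: "subgroup C A"
  shows "comm_group (A\<lparr>carrier := C\<rparr>)"
proof -
  interpret A: comm_group A by (rule A)
  interpret AC: group "A\<lparr>carrier := C\<rparr>" by (rule subgroup.subgroup_is_group[OF C A.is_group])
  show ?thesis
    by (rule AC.group_comm_groupI) (simp add: A.m_comm subgroup.mem_carrier[OF C])
qed

lemma subgroup_incl_hom: "subgroup C A \<Longrightarrow> id \<in> hom (A\<lparr>carrier := C\<rparr>) A"
  by (auto simp: hom_def dest: subgroup.mem_carrier)

lemma wedge_subgroup:
  "subgroup C A \<Longrightarrow> wedge Y pt (A\<lparr>carrier := C\<rparr>) = {s \<in> wedge Y pt A. \<forall>y. s y \<in> C}"
  using subgroup.subset by (auto simp: wedge_def)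

lemma push_subgroup:
  assumes A: "comm_group A" and C: "subgroup C A" and s: "s \<in> wedge Y pt (A\<lparr>carrier := C\<rparr>)"
  shows "push (A\<lparr>carrier := C\<rparr>) Y pt Z pt' g s = push A Y pt Z pt' g s"
  using hom_push[OF subgroup_comm_group[OF A C] A subgroup_incl_hom[OF C] s, of Z pt' g] by simp

lemma Gcar_subgroup:
  assumes A: "comm_group A" and C: "subgroup C A"
  shows "Gcar T p f (A\<lparr>carrier := C\<rparr>) = {g \<in> Gcar T p f A. \<forall>n y. g n y \<in> C}"
proof -
  have "g \<in> Gcar T p f (A\<lparr>carrier := C\<rparr>) \<longleftrightarrow> g \<in> Gcar T p f A"
    if "\<forall>n y. g n y \<in> C" "\<forall>n. g n \<in> wedge (T n) (p n) A" for g
  proof -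
    have "push (A\<lparr>carrier := C\<rparr>) (T (Suc n)) (p (Suc n)) (T n) (p n) (f n) (g (Suc n))
        = push A (T (Suc n)) (p (Suc n)) (T n) (p n) (f n) (g (Suc n))" for n
      by (rule push_subgroup[OF A C]) (simp add: wedge_subgroup[OF C] that)
    then show ?thesis using that unfolding Gcar_def wedge_subgroup[OF C] by simp
  qed
  then show ?thesis
    unfolding Gcar_def wedge_subgroup[OF C] by blast
qed

lemma Gmap_id: "Gmap id = id"
  by (simp add: Gmap_def fun_eq_iff)

lemma Ggrp_subgroup_incl:
  assumes "comm_group A" and "subgroup C A"
  shows "id \<in> hom (Ggrp T p f (A\<lparr>carrier := C\<rparr>)) (Ggrp T p f A)"
  using Gmap_hom[OF subgroup_comm_group[OF assms] assms(1) subgroup_incl_hom[OF assms(2)]]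
  unfolding Gmap_id .

lemma Gmap_kernel:
  assumes A: "comm_group A" and A': "comm_group A'" and h: "h \<in> hom A A'"
  shows "kernel (Ggrp T p f A) (Ggrp T p f A') (Gmap h) = Gcar T p f (A\<lparr>carrier := kernel A A' h\<rparr>)"
proof -
  interpret group_hom A A' h
    by (simp add: group_hom_def group_hom_axioms_def h comm_group.axioms(2)[OF A] comm_group.axioms(2)[OF A'])
  show ?thesis
    unfolding Gcar_subgroup[OF A subgroup_kernel]
    by (auto simp: kernel_def Gmap_def fun_eq_iff Gcar_carrier)
qed

section \<open>The subgroup \<open>K(X,A)\<close>\<close>

lemma limcar_basepoint: "tower T p f \<Longrightarrow> p \<in> limcar T f"
  by (auto simp: tower_def limcar_def)

lemma limcarD: "x \<in> limcar T f \<Longrightarrow> x n \<in> T n" "x \<in> limcar T f \<Longrightarrow> f n (x (Suc n)) = x n"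
  by (auto simp: limcar_def)

context comm_group
begin

lemma rho_Gcar:
  assumes tw: "tower T p f" and s: "s \<in> wedge (limcar T f) p G"
  shows "rho T p f G s \<in> Gcar T p f G"
proof (rule GcarI)
  fix n
  show "rho T p f G s n \<in> wedge (T n) (p n) G"
    unfolding rho_def by (rule push_wedge[OF s])
  have "push G (T (Suc n)) (p (Suc n)) (T n) (p n) (f n) (rho T p f G s (Suc n))
      = push G (limcar T f) p (T n) (p n) (f n \<circ> (\<lambda>x. x (Suc n))) s"
    unfolding rho_def
    by (rule push_comp[OF s]) (use tw in \<open>auto simp: limcar_def tower_def\<close>)
  also have "\<dots> = push G (limcar T f) p (T n) (p n) (\<lambda>x. x n) s"
    by (rule push_cong) (auto simp: limcar_def)
  finally show "push G (T (Suc n)) (p (Suc n)) (T n) (p n) (f n) (rho T p f G s (Suc n)) = rho T p f G s n"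
    unfolding rho_def .
qed

lemma rho_mult:
  assumes s: "s \<in> wedge (limcar T f) p G" and t: "t \<in> wedge (limcar T f) p G"
  shows "rho T p f G (\<lambda>y. s y \<otimes> t y) = rho T p f G s \<otimes>\<^bsub>Ggrp T p f G\<^esub> rho T p f G t"
  unfolding rho_def Ggrp_simps push_mult[OF s t] ..

lemma rho_inv:
  assumes tw: "tower T p f" and s: "s \<in> wedge (limcar T f) p G"
  shows "rho T p f G (\<lambda>y. inv (s y)) = inv\<^bsub>Ggrp T p f G\<^esub> (rho T p f G s)"
  unfolding Ggrp_inv[OF rho_Gcar[OF tw s]] unfolding rho_def push_inv[OF s] ..

lemma Kset_subgroup:
  assumes tw: "tower T p f"
  shows "subgroup (Kset T p f G) (Ggrp T p f G)"
proof -
  interpret GG: comm_group "Ggrp T p f G" by (rule Ggrp_comm_group)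
  show ?thesis
  proof (rule GG.subgroupI)
    show "Kset T p f G \<subseteq> carrier (Ggrp T p f G)"
      using rho_Gcar[OF tw] by (auto simp: Kset_def)
    show "Kset T p f G \<noteq> {}" unfolding Kset_def using wedge_one[of "limcar T f" p] by blast
    fix a assume "a \<in> Kset T p f G"
    then obtain s where s: "s \<in> wedge (limcar T f) p G" and a: "a = rho T p f G s"
      by (auto simp: Kset_def)
    show "inv\<^bsub>Ggrp T p f G\<^esub> a \<in> Kset T p f G"
      unfolding a rho_inv[OF tw s, symmetric] Kset_def using wedge_inv[OF s] by blast
    fix b assume "b \<in> Kset T p f G"
    then obtain t where t: "t \<in> wedge (limcar T f) p G" and b: "b = rho T p f G t"
      by (auto simp: Kset_def)
    show "a \<otimes>\<^bsub>Ggrp T p f G\<^esub> b \<in> Kset T p f G"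
      unfolding a b rho_mult[OF s t, symmetric] Kset_def using wedge_mult[OF s t] by blast
  qed
qed

end

lemma Gmap_rho:
  assumes A: "comm_group A" and A': "comm_group A'" and h: "h \<in> hom A A'"
    and s: "s \<in> wedge (limcar T f) p A"
  shows "Gmap h (rho T p f A s) = rho T p f A' (\<lambda>y. h (s y))"
  unfolding Gmap_def rho_def hom_push[OF A A' h s, symmetric] ..

lemma limcar_eventually_distinct:
  assumes x: "x \<in> limcar T f" and y: "y \<in> limcar T f" and xy: "x \<noteq> y"
  shows "eventually (\<lambda>m. x m \<noteq> y m) sequentially"
proof -
  obtain n where n: "x n \<noteq> y n" using xy by auto
  have "x (n + k) \<noteq> y (n + k)" for k
  proof (induction k)
    case (Suc k)
    then show ?case using limcarD(2)[OF x, of "n + k"] limcarD(2)[OF y, of "n + k"] by auto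
  qed (use n in simp)
  then show ?thesis
    by (intro eventually_sequentiallyI[of n]) (metis le_add_diff_inverse)
qed

text \<open>The finitely many support points of s and the basepoint become pairwise distinct at
  some level m, so the value of s at y survives in the pushforward to \<open>T m\<close>.\<close>

lemma (in comm_monoid) rho_recovers_value:
  assumes tw: "tower T p f" and s: "s \<in> wedge (limcar T f) p G" and y: "s y \<noteq> \<one>"
  shows "\<exists>m. rho T p f G s m (y m) = s y"
proof -
  define F where "F = {y. s y \<noteq> \<one>}"
  have F: "finite F" using wedgeD(3)[OF s] by (simp add: F_def)
  have yF: "y \<in> F" using y by (simp add: F_def)
  have FL: "F \<subseteq> limcar T f - {p}" using wedge_supp[OF s] by (simp add: F_def)
  have "\<forall>x\<in>insert p F - {y}. eventually (\<lambda>m. x m \<noteq> y m) sequentially"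
    using FL yF limcar_basepoint[OF tw] by (auto intro!: limcar_eventually_distinct)
  then have "eventually (\<lambda>m. \<forall>x\<in>insert p F - {y}. x m \<noteq> y m) sequentially"
    by (intro eventually_ball_finite) (use F in auto)
  then obtain m where m: "\<forall>x\<in>insert p F - {y}. x m \<noteq> y m"
    by (auto simp: eventually_sequentially)
  have ym: "y m \<in> T m - {p m}" using m FL yF limcarD(1)[of y T f m] by auto
  have "rho T p f G s m (y m) = (if y m \<in> T m - {p m} then finprod G s {x \<in> F. x m = y m} else \<one>)"
    unfolding rho_def by (rule push_eq_finprod[OF s F]) (simp add: F_def)
  then have "rho T p f G s m (y m) = finprod G s {x \<in> F. x m = y m}"
    using ym by simp
  also have "{x \<in> F. x m = y m} = {y}" using m yF by auto
  finally show ?thesis using wedgeD(1)[OF s] by auto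
qed

lemma Kset_subgroup_eq:
  assumes tw: "tower T p f" and A: "comm_group A" and C: "subgroup C A"
  shows "Kset T p f (A\<lparr>carrier := C\<rparr>) = {k \<in> Kset T p f A. \<forall>n y. k n y \<in> C}"
proof -
  interpret A: comm_group A by (rule A)
  have rho_C: "rho T p f (A\<lparr>carrier := C\<rparr>) s = rho T p f A s" if "s \<in> wedge (limcar T f) p (A\<lparr>carrier := C\<rparr>)" for s
    unfolding rho_def push_subgroup[OF A C that] ..
  have "(\<forall>y. s y \<in> C) \<longleftrightarrow> (\<forall>n z. rho T p f A s n z \<in> C)" if s: "s \<in> wedge (limcar T f) p A" for s
  proof
    assume "\<forall>y. s y \<in> C"
    then have "s \<in> wedge (limcar T f) p (A\<lparr>carrier := C\<rparr>)" using s by (simp add: wedge_subgroup[OF C])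
    then show "\<forall>n z. rho T p f A s n z \<in> C"
      using Gcar_carrier[OF comm_group.rho_Gcar[OF subgroup_comm_group[OF A C] tw]] rho_C by fastforce
  next
    assume "\<forall>n z. rho T p f A s n z \<in> C"
    then show "\<forall>y. s y \<in> C"
      using A.rho_recovers_value[OF tw s] subgroup.one_closed[OF C] by metis
  qed
  then show ?thesis
    unfolding Kset_def wedge_subgroup[OF C] by (auto simp: rho_C wedge_subgroup[OF C])
qed

lemma wedge_lift:
  assumes A: "comm_group A" and A': "comm_group A'" and h: "h \<in> hom A A'"
    and sur: "h ` carrier A = carrier A'" and s': "s' \<in> wedge Y pt A'"
  obtains s where "s \<in> wedge Y pt A" "(\<lambda>y. h (s y)) = s'"
    "{y. s y \<noteq> \<one>\<^bsub>A\<^esub>} \<subseteq> {y. s' y \<noteq> \<one>\<^bsub>A'\<^esub>}"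
proof -
  interpret group_hom A A' h
    by (simp add: group_hom_def group_hom_axioms_def h comm_group.axioms(2)[OF A] comm_group.axioms(2)[OF A'])
  have "\<exists>a. a \<in> carrier A \<and> h a = s' y" for y
    using wedgeD(1)[OF s'] sur by (metis imageE)
  then obtain pre where pre: "\<And>y. pre y \<in> carrier A \<and> h (pre y) = s' y" by metis
  define s where "s y = (if s' y = \<one>\<^bsub>A'\<^esub> then \<one>\<^bsub>A\<^esub> else pre y)" for y
  have "s \<in> wedge Y pt A"
    by (rule wedgeI) (use pre wedgeD[OF s'] in \<open>auto simp: s_def intro: finite_subset[OF _ wedgeD(3)[OF s']]\<close>)
  moreover have "(\<lambda>y. h (s y)) = s'" using pre by (auto simp: s_def)
  moreover have "{y. s y \<noteq> \<one>\<^bsub>A\<^esub>} \<subseteq> {y. s' y \<noteq> \<one>\<^bsub>A'\<^esub>}" by (auto simp: s_def)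
  ultimately show ?thesis by (rule that)
qed

lemma Gmap_Kset_surj:
  assumes A: "comm_group A" and A': "comm_group A'" and h: "h \<in> hom A A'"
    and sur: "h ` carrier A = carrier A'"
  shows "Gmap h ` Kset T p f A = Kset T p f A'"
proof -
  interpret group_hom A A' h
    by (simp add: group_hom_def group_hom_axioms_def h comm_group.axioms(2)[OF A] comm_group.axioms(2)[OF A'])
  have "Kset T p f A' \<subseteq> Gmap h ` Kset T p f A"
  proof
    fix k assume "k \<in> Kset T p f A'"
    then obtain s' where s': "s' \<in> wedge (limcar T f) p A'" and k: "k = rho T p f A' s'"
      by (auto simp: Kset_def)
    obtain s where s: "s \<in> wedge (limcar T f) p A" and "(\<lambda>y. h (s y)) = s'"
      using wedge_lift[OF A A' h sur s'] .
    then have "k = Gmap h (rho T p f A s)" unfolding k Gmap_rho[OF A A' h s] by simp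
    then show "k \<in> Gmap h ` Kset T p f A" using s by (auto simp: Kset_def)
  qed
  moreover have "Gmap h k \<in> Kset T p f A'" if k: "k \<in> Kset T p f A" for k
  proof -
    obtain s where s: "s \<in> wedge (limcar T f) p A" and k: "k = rho T p f A s"
      using k by (auto simp: Kset_def)
    show ?thesis unfolding k Gmap_rho[OF A A' h s] Kset_def using wedge_hom[OF h hom_one s] by blast
  qed
  ultimately show ?thesis by blast
qed

section \<open>Surjectivity of \<open>G\<close> under the Mittag-Leffler condition\<close>

lemma bond_add: "bond f n (a + b) = bond f n a \<circ> bond f (n + a) b"
  by (induction b) (simp_all add: add.assoc)

lemma bond_Suc_left: "bond f n (Suc k) = f n \<circ> bond f (Suc n) k"
  using bond_add[of f n 1 k] by simp

lemma bond_in_tower: "tower T p f \<Longrightarrow> x \<in> T (n + k) \<Longrightarrow> bond f n k x \<in> T n"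
proof (induction k arbitrary: x)
  case (Suc k)
  then have "f (n + k) x \<in> T (n + k)" by (auto simp: tower_def)
  then show ?case using Suc.IH[OF Suc.prems(1)] by simp
qed simp

lemma bond_basepoint: "tower T p f \<Longrightarrow> bond f n k (p (n + k)) = p n"
  by (induction k) (auto simp: tower_def)

lemma (in comm_monoid) push_bond:
  assumes tw: "tower T p f" and g: "g \<in> Gcar T p f G"
  shows "push G (T (n + k)) (p (n + k)) (T n) (p n) (bond f n k) (g (n + k)) = g n"
proof (induction k)
  case 0
  show ?case using push_id[OF GcarD(1)[OF g, of n]] by (simp add: id_def)
next
  case (Suc k)
  have "push G (T (n + Suc k)) (p (n + Suc k)) (T n) (p n) (bond f n (Suc k)) (g (n + Suc k))
      = push G (T (n + k)) (p (n + k)) (T n) (p n) (bond f n k)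
          (push G (T (Suc (n + k))) (p (Suc (n + k))) (T (n + k)) (p (n + k)) (f (n + k)) (g (Suc (n + k))))"
    unfolding bond.simps add_Suc_right
    by (rule push_comp[OF GcarD(1)[OF g], symmetric]) (use tw bond_basepoint[OF tw] in \<open>auto simp: tower_def\<close>)
  then show ?case unfolding GcarD(2)[OF g] Suc.IH .
qed

text \<open>The stable image \<open>X'(n)\<close>; under the Mittag-Leffler condition the intersection is
  attained at a finite stage.\<close>

definition stable_image :: "(nat \<Rightarrow> 'x set) \<Rightarrow> (nat \<Rightarrow> 'x \<Rightarrow> 'x) \<Rightarrow> nat \<Rightarrow> 'x set" where
  "stable_image T f n = (\<Inter>r\<in>{n..}. bond f n (r - n) ` T r)"

lemma stable_image_subset: "stable_image T f n \<subseteq> T n"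
  unfolding stable_image_def by auto

lemma bond_image_antimono:
  assumes tw: "tower T p f" and "n \<le> r'" "r' \<le> r"
  shows "bond f n (r - n) ` T r \<subseteq> bond f n (r' - n) ` T r'"
proof -
  have "r - n = (r' - n) + (r - r')" "n + (r' - n) = r'" "r' + (r - r') = r" using assms by simp_all
  then have "bond f n (r - n) ` T r = bond f n (r' - n) ` bond f r' (r - r') ` T r"
    using bond_add[of f n "r' - n" "r - r'"] by (simp add: image_comp)
  also have "\<dots> \<subseteq> bond f n (r' - n) ` T r'"
    using bond_in_tower[OF tw, of _ r' "r - r'"] \<open>r' + (r - r') = r\<close> by (intro image_mono) auto
  finally show ?thesis .
qed

locale ml_tower =
  fixes T :: "nat \<Rightarrow> 'x set" and p :: "nat \<Rightarrow> 'x" and f :: "nat \<Rightarrow> 'x \<Rightarrow> 'x"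
  assumes tower: "tower T p f" and ml: "mittag_leffler T f"
begin

lemma stable_image_eventually:
  "eventually (\<lambda>r. stable_image T f n = bond f n (r - n) ` T r) sequentially"
proof -
  from ml obtain s where s: "s \<ge> n" "\<forall>r\<ge>s. bond f n (s - n) ` T s = bond f n (r - n) ` T r"
    unfolding mittag_leffler_def by blast
  have "stable_image T f n = bond f n (s - n) ` T s"
  proof
    show "stable_image T f n \<subseteq> bond f n (s - n) ` T s"
      unfolding stable_image_def using s(1) by auto
    have "bond f n (s - n) ` T s \<subseteq> bond f n (r - n) ` T r" if "r \<ge> n" for r
      using s(2)[rule_format, of r] bond_image_antimono[OF tower that, of s] by (cases "r \<le> s") auto
    then show "bond f n (s - n) ` T s \<subseteq> stable_image T f n"
      unfolding stable_image_def by auto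
  qed
  then show ?thesis using s(2) by (auto simp: eventually_sequentially)
qed

lemma stable_image_bond: "f n ` stable_image T f (Suc n) = stable_image T f n"
proof -
  have "eventually (\<lambda>r. Suc n \<le> r \<and> stable_image T f n = bond f n (r - n) ` T r
      \<and> stable_image T f (Suc n) = bond f (Suc n) (r - Suc n) ` T r) sequentially"
    using stable_image_eventually[of n] stable_image_eventually[of "Suc n"]
    by (auto intro: eventually_conj eventually_ge_at_top)
  then obtain r where r: "Suc n \<le> r" "stable_image T f n = bond f n (r - n) ` T r"
    "stable_image T f (Suc n) = bond f (Suc n) (r - Suc n) ` T r"
    by (auto simp: eventually_sequentially)
  then have rn: "r - n = Suc (r - Suc n)" by simp
  show ?thesis unfolding r(2,3) rn bond_Suc_left image_comp by (rule refl)
qed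

lemma stable_image_section:
  obtains \<sigma> where "\<forall>z\<in>stable_image T f n. \<sigma> z \<in> stable_image T f (Suc n) \<and> f n (\<sigma> z) = z"
proof -
  have "\<forall>z\<in>stable_image T f n. \<exists>y. y \<in> stable_image T f (Suc n) \<and> f n y = z"
    unfolding stable_image_bond[of n, symmetric] by blast
  from bchoice[OF this] show ?thesis using that by blast
qed

end

lemma (in comm_monoid) Gcar_supp_stable_image:
  assumes "ml_tower T p f" and g: "g \<in> Gcar T p f G"
  shows "{y. g n y \<noteq> \<one>} \<subseteq> stable_image T f n"
proof -
  interpret ml_tower T p f by fact
  obtain r where r: "r \<ge> n" "stable_image T f n = bond f n (r - n) ` T r"
    using eventually_conj[OF stable_image_eventually[of n] eventually_ge_at_top[of n]]
    by (auto simp: eventually_sequentially)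
  then have "g n = push G (T r) (p r) (T n) (p n) (bond f n (r - n)) (g r)"
    using push_bond[OF tower g, of n "r - n"] by simp
  then have "{y. g n y \<noteq> \<one>} \<subseteq> bond f n (r - n) ` {y. g r y \<noteq> \<one>}"
    using push_supp by metis
  also have "\<dots> \<subseteq> stable_image T f n"
    unfolding r(2) using wedge_supp[OF GcarD(1)[OF g, of r]] by auto
  finally show ?thesis .
qed

lemma (in comm_monoid) push_section:
  assumes "ml_tower T p f" and d: "d \<in> wedge (T n) (p n) G"
    and dX: "{z. d z \<noteq> \<one>} \<subseteq> stable_image T f n"
  obtains e where "e \<in> wedge (T (Suc n)) (p (Suc n)) G"
    "{y. e y \<noteq> \<one>} \<subseteq> stable_image T f (Suc n)" "\<forall>y. e y = \<one> \<or> e y = d (f n y)"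
    "push G (T (Suc n)) (p (Suc n)) (T n) (p n) (f n) e = d"
proof -
  interpret ml_tower T p f by fact
  obtain \<sigma> where \<sigma>: "\<forall>z\<in>stable_image T f n. \<sigma> z \<in> stable_image T f (Suc n) \<and> f n (\<sigma> z) = z"
    by (rule stable_image_section[of n])
  define D where "D = {z. d z \<noteq> \<one>}"
  have D: "finite D" "D \<subseteq> T n - {p n}" "D \<subseteq> stable_image T f n"
    using wedgeD(3)[OF d] wedge_supp[OF d] dX by (simp_all add: D_def)
  define e where "e y = (if y \<in> \<sigma> ` D then d (f n y) else \<one>)" for y
  have \<sigma>D: "\<sigma> z \<in> stable_image T f (Suc n)" "f n (\<sigma> z) = z" if "z \<in> D" for z
    using \<sigma> D(3) that by blast+
  have fiber: "{y \<in> \<sigma> ` D. f n y = z} = (if z \<in> D then {\<sigma> z} else {})" for z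
    using \<sigma>D(2) by auto
  have "\<sigma> ` D \<subseteq> T (Suc n) - {p (Suc n)}"
  proof
    fix y assume "y \<in> \<sigma> ` D"
    then obtain z where z: "z \<in> D" "y = \<sigma> z" by auto
    have "y \<in> T (Suc n)" using subsetD[OF stable_image_subset \<sigma>D(1)[OF z(1)]] z(2) by simp
    moreover have "y \<noteq> p (Suc n)"
    proof
      assume "y = p (Suc n)"
      then have "z = p n" using \<sigma>D(2)[OF z(1)] z(2) tower by (simp add: tower_def)
      then show False using z(1) D(2) by blast
    qed
    ultimately show "y \<in> T (Suc n) - {p (Suc n)}" by simp
  qed
  moreover have e\<sigma>: "{y. e y \<noteq> \<one>} \<subseteq> \<sigma> ` D" by (auto simp: e_def)
  ultimately have e: "e \<in> wedge (T (Suc n)) (p (Suc n)) G"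
    using finite_subset[OF e\<sigma>] D(1) wedgeD(1)[OF d] by (intro wedgeI) (auto simp: e_def)
  moreover have "{y. e y \<noteq> \<one>} \<subseteq> stable_image T f (Suc n)"
    using e\<sigma> \<sigma>D(1) by blast
  moreover have "\<forall>y. e y = \<one> \<or> e y = d (f n y)" by (simp add: e_def)
  moreover have "push G (T (Suc n)) (p (Suc n)) (T n) (p n) (f n) e = d"
  proof
    fix z
    have "push G (T (Suc n)) (p (Suc n)) (T n) (p n) (f n) e z
        = (if z \<in> T n - {p n} then finprod G e {y \<in> \<sigma> ` D. f n y = z} else \<one>)"
      by (rule push_eq_finprod[OF e _ e\<sigma>]) (use D(1) in simp)
    also have "\<dots> = d z"
    proof (cases "z \<in> D")
      case True
      then have "e (\<sigma> z) = d z" using \<sigma>D(2) by (simp add: e_def)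
      moreover have "finprod G e {\<sigma> z} = e (\<sigma> z)"
        using finprod_insert[of "{}" "\<sigma> z" e] wedgeD(1)[OF e] by simp
      ultimately show ?thesis unfolding fiber using True D(2) by auto
    next
      case False
      then show ?thesis unfolding fiber by (simp add: D_def)
    qed
    finally show "push G (T (Suc n)) (p (Suc n)) (T n) (p n) (f n) e z = d z" .
  qed
  ultimately show ?thesis by (rule that)
qed


locale ml_surjection = ml_tower T p f + A: comm_group A + A': comm_group A' + group_hom A A' h
  for T :: "nat \<Rightarrow> 'x set" and p f and A :: "('a, 'b) monoid_scheme"
    and A' :: "('c, 'd) monoid_scheme" and h +
  assumes surj: "h ` carrier A = carrier A'"
begin

lemma lift_step:
  assumes g': "g' \<in> Gcar T p f A'" and a: "a \<in> wedge (T n) (p n) A"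
    and aX: "{y. a y \<noteq> \<one>\<^bsub>A\<^esub>} \<subseteq> stable_image T f n" and ha: "(\<lambda>y. h (a y)) = g' n"
  obtains a' where "a' \<in> wedge (T (Suc n)) (p (Suc n)) A"
    "{y. a' y \<noteq> \<one>\<^bsub>A\<^esub>} \<subseteq> stable_image T f (Suc n)" "(\<lambda>y. h (a' y)) = g' (Suc n)"
    "push A (T (Suc n)) (p (Suc n)) (T n) (p n) (f n) a' = a"
proof -
  let ?push = "push A (T (Suc n)) (p (Suc n)) (T n) (p n) (f n)"
  have hA: "h \<in> hom A A'" by (rule homh)
  obtain c where c: "c \<in> wedge (T (Suc n)) (p (Suc n)) A" "(\<lambda>y. h (c y)) = g' (Suc n)"
      "{y. c y \<noteq> \<one>\<^bsub>A\<^esub>} \<subseteq> {y. g' (Suc n) y \<noteq> \<one>\<^bsub>A'\<^esub>}"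
    using wedge_lift[OF A.comm_group_axioms A'.comm_group_axioms hA surj GcarD(1)[OF g']] .
  have cX: "{y. c y \<noteq> \<one>\<^bsub>A\<^esub>} \<subseteq> stable_image T f (Suc n)"
    using c(3) A'.Gcar_supp_stable_image[OF ml_tower_axioms g'] by blast
  have pc: "?push c \<in> wedge (T n) (p n) A" by (rule A.push_wedge[OF c(1)])
  have "(\<lambda>z. h (?push c z)) = g' n"
    using hom_push[OF A.comm_group_axioms A'.comm_group_axioms hA c(1), of "T n" "p n" "f n"]
    unfolding c(2) GcarD(2)[OF g'] .
  then have hpc: "h (?push c z) = g' n z" for z
    by (simp add: fun_eq_iff)
  define d where "d z = a z \<otimes>\<^bsub>A\<^esub> inv\<^bsub>A\<^esub> (?push c z)" for z
  have d: "d \<in> wedge (T n) (p n) A" unfolding d_def by (rule A.wedge_mult[OF a A.wedge_inv[OF pc]])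
  have "{z. ?push c z \<noteq> \<one>\<^bsub>A\<^esub>} \<subseteq> f n ` {y. c y \<noteq> \<one>\<^bsub>A\<^esub>}"
    by (rule A.push_supp)
  also have "\<dots> \<subseteq> stable_image T f n"
    unfolding stable_image_bond[of n, symmetric] using cX by (rule image_mono)
  finally have pcX: "{z. ?push c z \<noteq> \<one>\<^bsub>A\<^esub>} \<subseteq> stable_image T f n" .
  have dX: "{z. d z \<noteq> \<one>\<^bsub>A\<^esub>} \<subseteq> stable_image T f n"
    using A.supp_mult_subset[of a "\<lambda>z. inv\<^bsub>A\<^esub> (?push c z)"] A.supp_inv_subset[of "?push c"] aX pcX unfolding d_def by blast
  have hd: "h (d z) = \<one>\<^bsub>A'\<^esub>" for z
    using wedgeD(1)[OF a] wedgeD(1)[OF pc] fun_cong[OF ha, of z] Gcar_carrier[OF g', of n z]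
    by (simp add: d_def hpc)
  obtain e where e: "e \<in> wedge (T (Suc n)) (p (Suc n)) A"
    "{y. e y \<noteq> \<one>\<^bsub>A\<^esub>} \<subseteq> stable_image T f (Suc n)" "\<forall>y. e y = \<one>\<^bsub>A\<^esub> \<or> e y = d (f n y)"
    "?push e = d"
    by (rule A.push_section[OF ml_tower_axioms d dX])
  have he: "h (e y) = \<one>\<^bsub>A'\<^esub>" for y using e(3) hd by (metis hom_one)
  show ?thesis
  proof (rule that[of "\<lambda>y. c y \<otimes>\<^bsub>A\<^esub> e y"])
    show "(\<lambda>y. c y \<otimes>\<^bsub>A\<^esub> e y) \<in> wedge (T (Suc n)) (p (Suc n)) A"
      by (rule A.wedge_mult[OF c(1) e(1)])
    show "{y. c y \<otimes>\<^bsub>A\<^esub> e y \<noteq> \<one>\<^bsub>A\<^esub>} \<subseteq> stable_image T f (Suc n)"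
      using A.supp_mult_subset[of c e] cX e(2) by blast
    show "(\<lambda>y. h (c y \<otimes>\<^bsub>A\<^esub> e y)) = g' (Suc n)"
      using wedgeD(1)[OF c(1)] wedgeD(1)[OF e(1)] Gcar_carrier[OF g'] he
      by (simp add: fun_eq_iff flip: c(2))
    show "?push (\<lambda>y. c y \<otimes>\<^bsub>A\<^esub> e y) = a"
      unfolding A.push_mult[OF c(1) e(1)] e(4)
      using wedgeD(1)[OF a] wedgeD(1)[OF pc] by (auto simp: d_def fun_eq_iff A.m_lcomm)
  qed
qed

lemma Gmap_surj: "Gmap h ` Gcar T p f A = Gcar T p f A'"
proof
  show "Gmap h ` Gcar T p f A \<subseteq> Gcar T p f A'"
    using Gmap_hom[OF A.comm_group_axioms A'.comm_group_axioms homh, of T p f] by (auto simp: hom_def)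
next
  show "Gcar T p f A' \<subseteq> Gmap h ` Gcar T p f A"
  proof
    fix g' assume g': "g' \<in> Gcar T p f A'"
    define P where "P n a \<longleftrightarrow> a \<in> wedge (T n) (p n) A
      \<and> {y. a y \<noteq> \<one>\<^bsub>A\<^esub>} \<subseteq> stable_image T f n \<and> (\<lambda>y. h (a y)) = g' n" for n a
    have "\<exists>a. P 0 a"
    proof -
      obtain c where "c \<in> wedge (T 0) (p 0) A" "(\<lambda>y. h (c y)) = g' 0"
          "{y. c y \<noteq> \<one>\<^bsub>A\<^esub>} \<subseteq> {y. g' 0 y \<noteq> \<one>\<^bsub>A'\<^esub>}"
        using wedge_lift[OF A.comm_group_axioms A'.comm_group_axioms homh surj GcarD(1)[OF g']] .
      then show ?thesis
        using A'.Gcar_supp_stable_image[OF ml_tower_axioms g', of 0] unfolding P_def by blast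
    qed
    moreover have "\<exists>a'. P (Suc n) a' \<and> push A (T (Suc n)) (p (Suc n)) (T n) (p n) (f n) a' = a"
      if "P n a" for n a
      using lift_step[OF g', of a n] that unfolding P_def by metis
    ultimately have "\<exists>g. \<forall>n. P n (g n)
        \<and> push A (T (Suc n)) (p (Suc n)) (T n) (p n) (f n) (g (Suc n)) = g n"
      by (rule dependent_nat_choice[where Q = "\<lambda>n a a'. push A (T (Suc n)) (p (Suc n)) (T n) (p n) (f n) a' = a"])
    then obtain g where g: "\<And>n. P n (g n)"
      "\<And>n. push A (T (Suc n)) (p (Suc n)) (T n) (p n) (f n) (g (Suc n)) = g n"
      by blast
    have "g \<in> Gcar T p f A" by (rule GcarI) (use g in \<open>auto simp: P_def\<close>)
    moreover have "Gmap h g = g'" using g(1) by (auto simp: Gmap_def P_def fun_eq_iff)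
    ultimately show "g' \<in> Gmap h ` Gcar T p f A" by blast
  qed
qed

end

lemma (in group) rcos_eq_iff:
  assumes K: "subgroup K G" and a: "a \<in> carrier G" and b: "b \<in> carrier G"
  shows "K #> a = K #> b \<longleftrightarrow> a \<otimes> inv b \<in> K"
proof
  assume "K #> a = K #> b"
  then have "K #> (a \<otimes> inv b) = K" by (rule coset_mult_inv2[OF _ a b subgroup.subset[OF K]])
  then show "a \<otimes> inv b \<in> K" by (rule coset_join1) (use a b K in auto)
next
  assume "a \<otimes> inv b \<in> K"
  then have "K #> (a \<otimes> inv b) = K" by (intro coset_join2) (use a b K in auto)
  then show "K #> a = K #> b" by (rule coset_mult_inv1[OF _ a b subgroup.subset[OF K]])
qed

lemma (in group) rcos_inv_mult:
  assumes K: "subgroup K G" and r: "r \<in> K" and g: "g \<in> carrier G"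
  shows "K #> (inv r \<otimes> g) = K #> g"
  using coset_mult_assoc[OF subgroup.subset[OF K] _ g, of "inv r"] subgroup.rcos_const[OF K is_group]
    subgroup.m_inv_closed[OF K r] subgroup.mem_carrier[OF K r]
  by simp

text \<open>The map \<open>G/K \<rightarrow> H/K'\<close> induced by h, written in the form used in the definition of
  \<open>Hmap\<close>.\<close>

locale coset_map = G: comm_group G + H: comm_group H + group_hom G H h
  for G :: "('a, 'b) monoid_scheme" and H :: "('c, 'd) monoid_scheme" and h +
  fixes K K'
  assumes K: "subgroup K G" and K': "subgroup K' H" and hK: "h ` K \<subseteq> K'"
begin

lemma coset_map_rcos:
  assumes g: "g \<in> carrier G"
  shows "K' <#>\<^bsub>H\<^esub> (h ` (K #>\<^bsub>G\<^esub> g)) = K' #>\<^bsub>H\<^esub> h g"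
proof (intro equalityI subsetI)
  fix x assume "x \<in> K' <#>\<^bsub>H\<^esub> (h ` (K #>\<^bsub>G\<^esub> g))"
  then obtain k' k where k': "k' \<in> K'" and k: "k \<in> K" and x: "x = k' \<otimes>\<^bsub>H\<^esub> h (k \<otimes>\<^bsub>G\<^esub> g)"
    by (auto simp: set_mult_def r_coset_def)
  have "x = (k' \<otimes>\<^bsub>H\<^esub> h k) \<otimes>\<^bsub>H\<^esub> h g"
    using k k' g subgroup.mem_carrier[OF K] subgroup.mem_carrier[OF K'] by (simp add: x H.m_assoc)
  moreover have "k' \<otimes>\<^bsub>H\<^esub> h k \<in> K'" using k' k hK subgroup.m_closed[OF K'] by blast
  ultimately show "x \<in> K' #>\<^bsub>H\<^esub> h g" by (auto simp: r_coset_def)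
next
  fix x assume "x \<in> K' #>\<^bsub>H\<^esub> h g"
  then obtain k' where k': "k' \<in> K'" and x: "x = k' \<otimes>\<^bsub>H\<^esub> h g" by (auto simp: r_coset_def)
  have "h g \<in> h ` (K #>\<^bsub>G\<^esub> g)" using g G.rcos_self[OF g K] by blast
  then show "x \<in> K' <#>\<^bsub>H\<^esub> (h ` (K #>\<^bsub>G\<^esub> g))" unfolding set_mult_def using k' x by blast
qed

lemma coset_map_hom: "(\<lambda>c. K' <#>\<^bsub>H\<^esub> (h ` c)) \<in> hom (G Mod K) (H Mod K')"
proof (rule homI)
  fix c assume "c \<in> carrier (G Mod K)"
  then obtain g where "g \<in> carrier G" "c = K #>\<^bsub>G\<^esub> g" by (auto simp: carrier_FactGroup)
  then show "K' <#>\<^bsub>H\<^esub> (h ` c) \<in> carrier (H Mod K')"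
    by (auto simp: coset_map_rcos carrier_FactGroup)
next
  fix c d assume "c \<in> carrier (G Mod K)" "d \<in> carrier (G Mod K)"
  then obtain a b where a: "a \<in> carrier G" "c = K #>\<^bsub>G\<^esub> a"
    and b: "b \<in> carrier G" "d = K #>\<^bsub>G\<^esub> b" by (auto simp: carrier_FactGroup)
  have "c \<otimes>\<^bsub>G Mod K\<^esub> d = K #>\<^bsub>G\<^esub> (a \<otimes>\<^bsub>G\<^esub> b)"
    unfolding a b mult_FactGroup using normal.rcos_sum[OF G.subgroup_imp_normal[OF K] a(1) b(1)] .
  then show "K' <#>\<^bsub>H\<^esub> (h ` (c \<otimes>\<^bsub>G Mod K\<^esub> d))
      = (K' <#>\<^bsub>H\<^esub> (h ` c)) \<otimes>\<^bsub>H Mod K'\<^esub> (K' <#>\<^bsub>H\<^esub> (h ` d))"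
    using a b normal.rcos_sum[OF H.subgroup_imp_normal[OF K'], of "h a" "h b"]
    by (simp add: coset_map_rcos)
qed

lemma coset_map_inj:
  assumes "\<And>g. g \<in> carrier G \<Longrightarrow> h g \<in> K' \<Longrightarrow> g \<in> K"
  shows "inj_on (\<lambda>c. K' <#>\<^bsub>H\<^esub> (h ` c)) (carrier (G Mod K))"
proof (rule inj_onI)
  fix c d assume "c \<in> carrier (G Mod K)" "d \<in> carrier (G Mod K)"
  then obtain a b where a: "a \<in> carrier G" "c = K #>\<^bsub>G\<^esub> a"
    and b: "b \<in> carrier G" "d = K #>\<^bsub>G\<^esub> b" by (auto simp: carrier_FactGroup)
  assume "K' <#>\<^bsub>H\<^esub> (h ` c) = K' <#>\<^bsub>H\<^esub> (h ` d)"
  then have "h (a \<otimes>\<^bsub>G\<^esub> inv\<^bsub>G\<^esub> b) \<in> K'"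
    using H.rcos_eq_iff[OF K', of "h a" "h b"] a b by (simp add: coset_map_rcos)
  then show "c = d" using assms[of "a \<otimes>\<^bsub>G\<^esub> inv\<^bsub>G\<^esub> b"] G.rcos_eq_iff[OF K] a b by simp
qed

lemma coset_map_image:
  "(\<lambda>c. K' <#>\<^bsub>H\<^esub> (h ` c)) ` carrier (G Mod K) = (\<lambda>g. K' #>\<^bsub>H\<^esub> h g) ` carrier G"
  unfolding carrier_FactGroup image_image by (rule image_cong) (simp_all add: coset_map_rcos)

end

section \<open>The groups \<open>H(X,A)\<close>\<close>

lemma (in comm_group) torsion_subgroup: "subgroup (torsion G n) G"
  by (rule subgroupI) (auto simp: torsion_def nat_pow_inv nat_pow_distrib)

lemma (in comm_group) npowers_subgroup: "subgroup (npowers G n) G"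
proof (rule subgroupI)
  fix a b assume "a \<in> npowers G n" "b \<in> npowers G n"
  then obtain x y where "x \<in> carrier G" "y \<in> carrier G" "a = x [^] n" "b = y [^] n"
    by (auto simp: npowers_def)
  then have "inv a = inv x [^] n" "a \<otimes> b = (x \<otimes> y) [^] n"
    by (simp_all add: nat_pow_inv nat_pow_distrib)
  then show "inv a \<in> npowers G n" "a \<otimes> b \<in> npowers G n"
    using \<open>x \<in> carrier G\<close> \<open>y \<in> carrier G\<close> by (simp_all add: npowers_def)
qed (auto simp: npowers_def)

lemma (in comm_group) pow_hom_npowers: "(\<lambda>a. a [^] n) \<in> hom G (G\<lparr>carrier := npowers G n\<rparr>)"
  by (rule homI) (auto simp: npowers_def nat_pow_distrib)

lemma kernel_pow_npowers: "kernel A (A\<lparr>carrier := npowers A n\<rparr>) (\<lambda>a. a [^]\<^bsub>A\<^esub> n) = torsion A n"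
  by (simp add: kernel_def torsion_def)

lemma (in group) kernel_r_coset:
  assumes B: "subgroup B G"
  shows "kernel G (G Mod B) (\<lambda>a. B #> a) = B"
proof (intro equalityI subsetI)
  fix a assume "a \<in> kernel G (G Mod B) (\<lambda>a. B #> a)"
  then show "a \<in> B" using coset_join1[OF _ _ B] by (simp add: kernel_def)
next
  fix a assume a: "a \<in> B"
  then show "a \<in> kernel G (G Mod B) (\<lambda>a. B #> a)"
    using coset_join2[OF subgroup.mem_carrier[OF B a] B a] subgroup.mem_carrier[OF B a]
    by (simp add: kernel_def)
qed

locale tower_coefficients = A: comm_group A
  for T :: "nat \<Rightarrow> 'x set" and p :: "nat \<Rightarrow> 'x" and f :: "nat \<Rightarrow> 'x \<Rightarrow> 'x"
    and A :: "('a, 'b) monoid_scheme" +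
  assumes tower: "tower T p f"
begin

interpretation GA: comm_group "Ggrp T p f A" by (rule A.Ggrp_comm_group)

abbreviation "GA \<equiv> Ggrp T p f A"
abbreviation "KA \<equiv> Kset T p f A"

lemma Kset_normal: "normal KA GA"
  by (rule GA.subgroup_imp_normal[OF A.Kset_subgroup[OF tower]])

lemma Hgrp_carrier: "carrier (Hgrp T p f A) = (\<lambda>g. KA #>\<^bsub>GA\<^esub> g) ` Gcar T p f A"
  by (simp add: Hgrp_def carrier_FactGroup)

lemma Hgrp_pow:
  "g \<in> Gcar T p f A \<Longrightarrow> (KA #>\<^bsub>GA\<^esub> g) [^]\<^bsub>Hgrp T p f A\<^esub> (n::nat) = KA #>\<^bsub>GA\<^esub> (g [^]\<^bsub>GA\<^esub> n)"
  unfolding Hgrp_def using normal.FactGroup_pow[OF Kset_normal, of g n] by simp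

lemma Hmap_subgroup_incl:
  assumes C: "subgroup C A"
  shows "Hmap T p f A id \<in> hom (Hgrp T p f (A\<lparr>carrier := C\<rparr>)) (Hgrp T p f A)"
    and "inj_on (Hmap T p f A id) (carrier (Hgrp T p f (A\<lparr>carrier := C\<rparr>)))"
    and "Hmap T p f A id ` carrier (Hgrp T p f (A\<lparr>carrier := C\<rparr>))
         = (\<lambda>g. KA #>\<^bsub>GA\<^esub> g) ` Gcar T p f (A\<lparr>carrier := C\<rparr>)"
proof -
  have AC: "comm_group (A\<lparr>carrier := C\<rparr>)" by (rule subgroup_comm_group[OF A.comm_group_axioms C])
  have "Gmap id \<in> hom (Ggrp T p f (A\<lparr>carrier := C\<rparr>)) GA"
    by (rule Gmap_hom[OF AC A.comm_group_axioms subgroup_incl_hom[OF C]])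
  moreover have "Gmap id ` Kset T p f (A\<lparr>carrier := C\<rparr>) \<subseteq> KA"
    unfolding Gmap_id Kset_subgroup_eq[OF tower A.comm_group_axioms C] by auto
  ultimately interpret coset_map "Ggrp T p f (A\<lparr>carrier := C\<rparr>)" GA "Gmap id"
      "Kset T p f (A\<lparr>carrier := C\<rparr>)" KA
    by (simp add: coset_map_def coset_map_axioms_def group_hom_def group_hom_axioms_def
        comm_group.Ggrp_comm_group[OF AC] GA.comm_group_axioms GA.is_group comm_group.axioms(2)
        comm_group.Kset_subgroup[OF AC tower] A.Kset_subgroup[OF tower])
  show "Hmap T p f A id \<in> hom (Hgrp T p f (A\<lparr>carrier := C\<rparr>)) (Hgrp T p f A)"
    unfolding Hmap_def[abs_def] Hgrp_def by (rule coset_map_hom)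
  show "inj_on (Hmap T p f A id) (carrier (Hgrp T p f (A\<lparr>carrier := C\<rparr>)))"
    unfolding Hmap_def[abs_def] Hgrp_def
    by (rule coset_map_inj)
       (simp add: Gmap_id Gcar_subgroup[OF A.comm_group_axioms C] Kset_subgroup_eq[OF tower A.comm_group_axioms C])
  show "Hmap T p f A id ` carrier (Hgrp T p f (A\<lparr>carrier := C\<rparr>))
      = (\<lambda>g. KA #>\<^bsub>GA\<^esub> g) ` Gcar T p f (A\<lparr>carrier := C\<rparr>)"
    unfolding Hmap_def[abs_def] Hgrp_def coset_map_image by (simp add: Gmap_id)
qed

text \<open>Since \<open>Gmap h\<close> maps \<open>K(X,A)\<close> onto \<open>K(X,A')\<close>, the coset of g has a representative
  in the kernel of \<open>Gmap h\<close>.\<close>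

lemma rcos_rep_in_kernel:
  assumes A': "comm_group A'" and h: "h \<in> hom A A'" and sur: "h ` carrier A = carrier A'"
    and g: "g \<in> Gcar T p f A" and hg: "Gmap h g \<in> Kset T p f A'"
  obtains g' where "g' \<in> kernel GA (Ggrp T p f A') (Gmap h)" "KA #>\<^bsub>GA\<^esub> g' = KA #>\<^bsub>GA\<^esub> g"
proof -
  interpret GA': comm_group "Ggrp T p f A'" by (rule comm_group.Ggrp_comm_group[OF A'])
  interpret group_hom GA "Ggrp T p f A'" "Gmap h"
    by (simp add: group_hom_def group_hom_axioms_def GA.is_group GA'.is_group
        Gmap_hom[OF A.comm_group_axioms A' h])
  obtain r where r: "r \<in> KA" "Gmap h r = Gmap h g"
    using hg Gmap_Kset_surj[OF A.comm_group_axioms A' h sur] by (metis imageE)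
  have rc: "r \<in> carrier GA" using r(1) subgroup.mem_carrier[OF A.Kset_subgroup[OF tower]] by blast
  show ?thesis
  proof (rule that[of "inv\<^bsub>GA\<^esub> r \<otimes>\<^bsub>GA\<^esub> g"])
    have gc: "g \<in> carrier GA" using g by simp
    have "Gmap h (inv\<^bsub>GA\<^esub> r \<otimes>\<^bsub>GA\<^esub> g) = inv\<^bsub>Ggrp T p f A'\<^esub> Gmap h g \<otimes>\<^bsub>Ggrp T p f A'\<^esub> Gmap h g"
      using rc gc by (simp only: hom_mult GA.inv_closed hom_inv r(2))
    also have "\<dots> = \<one>\<^bsub>Ggrp T p f A'\<^esub>" using gc by (simp only: GA'.l_inv hom_closed)
    finally show "inv\<^bsub>GA\<^esub> r \<otimes>\<^bsub>GA\<^esub> g \<in> kernel GA (Ggrp T p f A') (Gmap h)"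
      using rc gc by (simp only: kernel_def mem_Collect_eq GA.m_closed GA.inv_closed simp_thms)
    show "KA #>\<^bsub>GA\<^esub> (inv\<^bsub>GA\<^esub> r \<otimes>\<^bsub>GA\<^esub> g) = KA #>\<^bsub>GA\<^esub> g"
      using GA.rcos_inv_mult[OF A.Kset_subgroup[OF tower] r(1)] g by simp
  qed
qed

lemma Gmap_surj_ml:
  assumes "mittag_leffler T f" and "comm_group A'" and "h \<in> hom A A'" and "h ` carrier A = carrier A'"
  shows "Gmap h ` Gcar T p f A = Gcar T p f A'"
  using assms tower A.comm_group_axioms
  by (intro ml_surjection.Gmap_surj)
     (simp add: ml_surjection_def ml_surjection_axioms_def ml_tower_def group_hom_def
       group_hom_axioms_def comm_group.axioms(2))

lemma Gmap_pow: "Gmap (\<lambda>a. a [^]\<^bsub>A\<^esub> n) g = g [^]\<^bsub>GA\<^esub> (n::nat)"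
  by (simp add: Gmap_def A.Ggrp_pow)

lemma Ggrp_torsion_kernel:
  "torsion GA n = kernel GA (Ggrp T p f (A\<lparr>carrier := npowers A n\<rparr>)) (Gmap (\<lambda>a. a [^]\<^bsub>A\<^esub> n))"
  by (simp add: torsion_def kernel_def Gmap_pow)

lemma Gcar_torsion: "Gcar T p f (A\<lparr>carrier := torsion A n\<rparr>) = torsion GA n"
proof -
  have "Gcar T p f (A\<lparr>carrier := torsion A n\<rparr>)
      = Gcar T p f (A\<lparr>carrier := kernel A (A\<lparr>carrier := npowers A n\<rparr>) (\<lambda>a. a [^]\<^bsub>A\<^esub> n)\<rparr>)"
    by (simp only: kernel_pow_npowers)
  also have "\<dots> = torsion GA n"
    unfolding Ggrp_torsion_kernel
    by (rule Gmap_kernel[OF A.comm_group_axioms subgroup_comm_group[OF A.comm_group_axioms A.npowers_subgroup]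
          A.pow_hom_npowers, symmetric])
  finally show ?thesis .
qed

lemma Hmap_torsion:
  "Hmap T p f A id ` carrier (Hgrp T p f (A\<lparr>carrier := torsion A n\<rparr>)) = torsion (Hgrp T p f A) n"
  unfolding Hmap_subgroup_incl(3)[OF A.torsion_subgroup] Gcar_torsion
proof (intro equalityI subsetI)
  fix c assume "c \<in> (\<lambda>g. KA #>\<^bsub>GA\<^esub> g) ` torsion GA n"
  then obtain g where g: "g \<in> Gcar T p f A" "g [^]\<^bsub>GA\<^esub> n = \<one>\<^bsub>GA\<^esub>" and c: "c = KA #>\<^bsub>GA\<^esub> g"
    by (auto simp: torsion_def)
  have "c [^]\<^bsub>Hgrp T p f A\<^esub> n = \<one>\<^bsub>Hgrp T p f A\<^esub>"
    unfolding c Hgrp_pow[OF g(1)] g(2)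
    using GA.coset_mult_one[OF subgroup.subset[OF A.Kset_subgroup[OF tower]]] by (simp add: Hgrp_def)
  then show "c \<in> torsion (Hgrp T p f A) n"
    using g(1) c by (auto simp: torsion_def Hgrp_carrier)
next
  fix c assume c: "c \<in> torsion (Hgrp T p f A) n"
  then obtain g where g: "g \<in> Gcar T p f A" and c: "c = KA #>\<^bsub>GA\<^esub> g"
    by (auto simp: torsion_def Hgrp_carrier)
  then have "KA #>\<^bsub>GA\<^esub> (g [^]\<^bsub>GA\<^esub> n) = KA"
    using \<open>c \<in> torsion _ n\<close> Hgrp_pow[OF g] by (simp add: torsion_def Hgrp_def)
  then have "g [^]\<^bsub>GA\<^esub> n \<in> KA"
    using GA.coset_join1[OF _ _ A.Kset_subgroup[OF tower]] GA.nat_pow_closed[of g n] g by simp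
  moreover have "(g [^]\<^bsub>GA\<^esub> n) m y \<in> npowers A n" for m y
    using Gcar_carrier[OF g] by (simp add: A.Ggrp_pow npowers_def)
  ultimately have "Gmap (\<lambda>a. a [^]\<^bsub>A\<^esub> n) g \<in> Kset T p f (A\<lparr>carrier := npowers A n\<rparr>)"
    by (simp add: Gmap_pow Kset_subgroup_eq[OF tower A.comm_group_axioms A.npowers_subgroup])
  moreover have "(\<lambda>a. a [^]\<^bsub>A\<^esub> n) ` carrier A = carrier (A\<lparr>carrier := npowers A n\<rparr>)"
    by (simp add: npowers_def)
  ultimately obtain g' where "g' \<in> torsion GA n" "KA #>\<^bsub>GA\<^esub> g' = c"
    using rcos_rep_in_kernel[OF subgroup_comm_group[OF A.comm_group_axioms A.npowers_subgroup]
        A.pow_hom_npowers _ g] c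
    unfolding Ggrp_torsion_kernel by blast
  then show "c \<in> (\<lambda>g. KA #>\<^bsub>GA\<^esub> g) ` torsion GA n" by blast
qed

lemma Gcar_npowers:
  assumes ml: "mittag_leffler T f"
  shows "Gcar T p f (A\<lparr>carrier := npowers A n\<rparr>) = npowers GA n"
proof -
  have "npowers GA n = Gmap (\<lambda>a. a [^]\<^bsub>A\<^esub> n) ` Gcar T p f A"
    unfolding npowers_def Gmap_pow by simp
  also have "\<dots> = Gcar T p f (A\<lparr>carrier := npowers A n\<rparr>)"
    by (rule Gmap_surj_ml[OF ml subgroup_comm_group[OF A.comm_group_axioms A.npowers_subgroup]
          A.pow_hom_npowers]) (simp add: npowers_def)
  finally show ?thesis by simp
qed

lemma Hmap_npowers:
  assumes ml: "mittag_leffler T f"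
  shows "Hmap T p f A id ` carrier (Hgrp T p f (A\<lparr>carrier := npowers A n\<rparr>)) = npowers (Hgrp T p f A) n"
proof -
  have "Hmap T p f A id ` carrier (Hgrp T p f (A\<lparr>carrier := npowers A n\<rparr>))
      = (\<lambda>g. KA #>\<^bsub>GA\<^esub> g) ` npowers GA n"
    using Hmap_subgroup_incl(3)[OF A.npowers_subgroup] Gcar_npowers[OF ml] by simp
  also have "\<dots> = (\<lambda>c. c [^]\<^bsub>Hgrp T p f A\<^esub> n) ` (\<lambda>g. KA #>\<^bsub>GA\<^esub> g) ` Gcar T p f A"
    unfolding npowers_def image_image by (rule image_cong) (simp_all add: Hgrp_pow)
  finally show ?thesis unfolding npowers_def Hgrp_carrier .
qed

context
  fixes B assumes B: "subgroup B A"
begin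

abbreviation "q \<equiv> \<lambda>a. B #>\<^bsub>A\<^esub> a"

lemma quotient_comm_group: "comm_group (A Mod B)"
  by (rule A.abelian_FactGroup[OF B])

lemma quotient_hom: "q \<in> hom A (A Mod B)"
  by (rule normal.r_coset_hom_Mod[OF A.subgroup_imp_normal[OF B]])

lemma quotient_surj: "q ` carrier A = carrier (A Mod B)"
  by (simp add: carrier_FactGroup)

lemma Gquot_hom: "Gmap q \<in> hom GA (Ggrp T p f (A Mod B))"
  by (rule Gmap_hom[OF A.comm_group_axioms quotient_comm_group quotient_hom])

lemma Gquot_kernel: "kernel GA (Ggrp T p f (A Mod B)) (Gmap q) = Gcar T p f (A\<lparr>carrier := B\<rparr>)"
  unfolding Gmap_kernel[OF A.comm_group_axioms quotient_comm_group quotient_hom] A.kernel_r_coset[OF B] ..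

lemma Gquot_surj: "mittag_leffler T f \<Longrightarrow> Gmap q ` Gcar T p f A = Gcar T p f (A Mod B)"
  by (rule Gmap_surj_ml[OF _ quotient_comm_group quotient_hom quotient_surj])

interpretation GQ: comm_group "Ggrp T p f (A Mod B)"
  by (rule comm_group.Ggrp_comm_group[OF quotient_comm_group])

interpretation Q: coset_map GA "Ggrp T p f (A Mod B)" "Gmap q" KA "Kset T p f (A Mod B)"
  by (simp add: coset_map_def coset_map_axioms_def group_hom_def group_hom_axioms_def
      GA.comm_group_axioms GA.is_group comm_group.Ggrp_comm_group[OF quotient_comm_group]
      comm_group.axioms(2) A.Kset_subgroup[OF tower] comm_group.Kset_subgroup[OF quotient_comm_group tower]
      Gquot_hom Gmap_Kset_surj[OF A.comm_group_axioms quotient_comm_group quotient_hom quotient_surj])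

lemma Hquot_hom: "Hmap T p f (A Mod B) q \<in> hom (Hgrp T p f A) (Hgrp T p f (A Mod B))"
  unfolding Hmap_def[abs_def] Hgrp_def by (rule Q.coset_map_hom)

lemma Hquot_surj:
  "mittag_leffler T f \<Longrightarrow> Hmap T p f (A Mod B) q ` carrier (Hgrp T p f A) = carrier (Hgrp T p f (A Mod B))"
  unfolding Hmap_def[abs_def] Hgrp_def Q.coset_map_image
  by (simp add: carrier_FactGroup image_image flip: Gquot_surj)

lemma Hquot_kernel:
  "kernel (Hgrp T p f A) (Hgrp T p f (A Mod B)) (Hmap T p f (A Mod B) q)
     = Hmap T p f A id ` carrier (Hgrp T p f (A\<lparr>carrier := B\<rparr>))"
  unfolding Hmap_subgroup_incl(3)[OF B]
proof (intro equalityI subsetI)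
  fix c assume c: "c \<in> kernel (Hgrp T p f A) (Hgrp T p f (A Mod B)) (Hmap T p f (A Mod B) q)"
  then obtain g where g: "g \<in> Gcar T p f A" and c: "c = KA #>\<^bsub>GA\<^esub> g"
    by (auto simp: kernel_def Hgrp_carrier)
  with \<open>c \<in> kernel _ _ _\<close>
  have "Kset T p f (A Mod B) #>\<^bsub>Ggrp T p f (A Mod B)\<^esub> Gmap q g = Kset T p f (A Mod B)"
    by (simp add: kernel_def Hmap_def Q.coset_map_rcos Hgrp_def)
  then have "Gmap q g \<in> Kset T p f (A Mod B)"
    using GQ.coset_join1[OF _ _ comm_group.Kset_subgroup[OF quotient_comm_group tower]] Gquot_hom g
    by (auto simp: hom_def)
  then obtain g' where "g' \<in> Gcar T p f (A\<lparr>carrier := B\<rparr>)" "KA #>\<^bsub>GA\<^esub> g' = c"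
    using rcos_rep_in_kernel[OF quotient_comm_group quotient_hom quotient_surj g] c
    unfolding Gquot_kernel by blast
  then show "c \<in> (\<lambda>g. KA #>\<^bsub>GA\<^esub> g) ` Gcar T p f (A\<lparr>carrier := B\<rparr>)" by blast
next
  fix c assume "c \<in> (\<lambda>g. KA #>\<^bsub>GA\<^esub> g) ` Gcar T p f (A\<lparr>carrier := B\<rparr>)"
  then obtain g where g: "g \<in> kernel GA (Ggrp T p f (A Mod B)) (Gmap q)" and c: "c = KA #>\<^bsub>GA\<^esub> g"
    unfolding Gquot_kernel by blast
  then have gc: "g \<in> carrier GA" and g1: "Gmap q g = \<one>\<^bsub>Ggrp T p f (A Mod B)\<^esub>"
    by (simp_all only: kernel_def mem_Collect_eq)
  have "Hmap T p f (A Mod B) q c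
      = Kset T p f (A Mod B) #>\<^bsub>Ggrp T p f (A Mod B)\<^esub> \<one>\<^bsub>Ggrp T p f (A Mod B)\<^esub>"
    unfolding Hmap_def c Q.coset_map_rcos[OF gc] g1 ..
  also have "\<dots> = Kset T p f (A Mod B)"
    by (rule GQ.coset_mult_one[OF subgroup.subset[OF comm_group.Kset_subgroup[OF quotient_comm_group tower]]])
  finally have "Hmap T p f (A Mod B) q c = Kset T p f (A Mod B)" .
  then show "c \<in> kernel (Hgrp T p f A) (Hgrp T p f (A Mod B)) (Hmap T p f (A Mod B) q)"
    using gc c by (auto simp: kernel_def Hgrp_carrier[unfolded Hgrp_def] Hgrp_def)
qed

end

end

theorem mainTheorem13:
  fixes T :: "nat \<Rightarrow> 'x set" and p :: "nat \<Rightarrow> 'x" and f :: "nat \<Rightarrow> 'x \<Rightarrow> 'x"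
    and A :: "('a, 'b) monoid_scheme" and B :: "'a set"
  assumes "tower T p f" and "comm_group A" and "subgroup B A"
  shows
    \<comment> \<open>H-version\<close>
    "(Hmap T p f A id \<in> hom (Hgrp T p f (A\<lparr>carrier := B\<rparr>)) (Hgrp T p f A)
      \<and> inj_on (Hmap T p f A id) (carrier (Hgrp T p f (A\<lparr>carrier := B\<rparr>))))
   \<and> (\<forall>n::nat. n \<ge> 1 \<longrightarrow>
        Hmap T p f A id \<in> hom (Hgrp T p f (A\<lparr>carrier := torsion A n\<rparr>)) (Hgrp T p f A)
      \<and> bij_betw (Hmap T p f A id) (carrier (Hgrp T p f (A\<lparr>carrier := torsion A n\<rparr>)))
                 (torsion (Hgrp T p f A) n))
   \<and> (mittag_leffler T f \<longrightarrow>
        (Hmap T p f (A Mod B) (\<lambda>a. B #>\<^bsub>A\<^esub> a) \<in> hom (Hgrp T p f A) (Hgrp T p f (A Mod B))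
         \<and> Hmap T p f (A Mod B) (\<lambda>a. B #>\<^bsub>A\<^esub> a) ` carrier (Hgrp T p f A)
             = carrier (Hgrp T p f (A Mod B))
         \<and> kernel (Hgrp T p f A) (Hgrp T p f (A Mod B)) (Hmap T p f (A Mod B) (\<lambda>a. B #>\<^bsub>A\<^esub> a))
             = Hmap T p f A id ` carrier (Hgrp T p f (A\<lparr>carrier := B\<rparr>)))
      \<and> (\<forall>n::nat. n \<ge> 1 \<longrightarrow>
          Hmap T p f A id \<in> hom (Hgrp T p f (A\<lparr>carrier := npowers A n\<rparr>)) (Hgrp T p f A)
        \<and> bij_betw (Hmap T p f A id) (carrier (Hgrp T p f (A\<lparr>carrier := npowers A n\<rparr>)))
                   (npowers (Hgrp T p f A) n)))
   \<comment> \<open>G-version (inclusion is the identity on sequences)\<close>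
   \<and> (id \<in> hom (Ggrp T p f (A\<lparr>carrier := B\<rparr>)) (Ggrp T p f A)
      \<and> inj_on id (carrier (Ggrp T p f (A\<lparr>carrier := B\<rparr>))))
   \<and> (\<forall>n::nat. n \<ge> 1 \<longrightarrow>
        id \<in> hom (Ggrp T p f (A\<lparr>carrier := torsion A n\<rparr>)) (Ggrp T p f A)
      \<and> bij_betw id (carrier (Ggrp T p f (A\<lparr>carrier := torsion A n\<rparr>)))
                 (torsion (Ggrp T p f A) n))
   \<and> (mittag_leffler T f \<longrightarrow>
        (Gmap (\<lambda>a. B #>\<^bsub>A\<^esub> a) \<in> hom (Ggrp T p f A) (Ggrp T p f (A Mod B))
         \<and> Gmap (\<lambda>a. B #>\<^bsub>A\<^esub> a) ` carrier (Ggrp T p f A) = carrier (Ggrp T p f (A Mod B))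
         \<and> kernel (Ggrp T p f A) (Ggrp T p f (A Mod B)) (Gmap (\<lambda>a. B #>\<^bsub>A\<^esub> a))
             = carrier (Ggrp T p f (A\<lparr>carrier := B\<rparr>)))
      \<and> (\<forall>n::nat. n \<ge> 1 \<longrightarrow>
          id \<in> hom (Ggrp T p f (A\<lparr>carrier := npowers A n\<rparr>)) (Ggrp T p f A)
        \<and> bij_betw id (carrier (Ggrp T p f (A\<lparr>carrier := npowers A n\<rparr>)))
                   (npowers (Ggrp T p f A) n)))"
proof -
  interpret tower_coefficients T p f A
    using assms(1,2) by (simp add: tower_coefficients_def tower_coefficients_axioms_def)
  show ?thesis
    using Hmap_subgroup_incl(1,2)[OF assms(3)] Hmap_subgroup_incl(1,2)[OF A.torsion_subgroup]
      Hmap_subgroup_incl(1,2)[OF A.npowers_subgroup] Hmap_torsion Hmap_npowers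
      Hquot_hom[OF assms(3)] Hquot_surj[OF assms(3)] Hquot_kernel[OF assms(3)]
      Ggrp_subgroup_incl[OF assms(2,3)] Ggrp_subgroup_incl[OF assms(2) A.torsion_subgroup]
      Ggrp_subgroup_incl[OF assms(2) A.npowers_subgroup] Gcar_torsion Gcar_npowers
      Gquot_hom[OF assms(3)] Gquot_surj[OF assms(3)] Gquot_kernel[OF assms(3)]
    by (auto simp: bij_betw_def)
qed

end
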